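(* Let $f:E\to X$ be a fibrewise pointed map between fibrewise well-pointed spaces over $B$, and assume that either $E$ and $X$ are normal spaces, or $f$ is a closed fibrewise cofibration and $X$ is normal. Then $$\mathrm{secat}_B(f)\le\mathrm{secat}^B_B(f)\le\mathrm{secat}_B(f)+1.$$
   Context: Fibrewise space over $B$: a space $X$ with a map $p_X:X\to B$; fibrewise map: $f$ with $p_Yf=p_X$. Fibrewise pointed space: fibrewise space with a section $s_X:B\to X$ of $p_X$; fibrewise pointed map: fibrewise map with $fs_X=s_Y$. The fibrewise cylinder $I_B(X)$ is $X\times[0,1]$ with projection $(x,t)\mapsto p_X(x)$; a fibrewise homotopy is a fibrewise map $I_B(X)\to Y$ ($\simeq_B$). A fibrewise pointed homotopy between fibrewise pointed maps is a fibrewise homotopy $H$ with $H(s_X(b),t)=s_Y(b)$ for all $b,t$ ($\simeq^B_B$). A fibrewise map $j:A\to X$ is a fibrewise cofibration if it has the homotopy extension property for fibrewise homotopies (for all fibrewise $g:X\to Y$, $H:I_B(A)\to Y$ with $H(-,0)=gj$ there is $\tilde H:I_B(X)\to Y$ with $\tilde H(-,0)=g$, $\tilde H\circ(j\times\mathrm{id})=H$); it is closed if $j(A)$ is closed. $X$ is fibrewise well-pointed if $s_X$ is a closed fibrewise cofibration. $\mathrm{secat}_B(f)$: least $n$ such that $X$ is covered by $n+1$ open sets $U$ each with a fibrewise map $s:U\to E$ with $fs\simeq_B$ the inclusion $U\hookrightarrow X$. $\mathrm{secat}^B_B(f)$: least $n$ such that $X$ is covered by $n+1$ open sets $U$, each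 containing $s_X(B)$ (so a fibrewise pointed space with section $s_X$) and each admitting a fibrewise pointed map $s:U\to E$ with $fs\simeq^B_B$ the inclusion $U\hookrightarrow X$. Both are $\infty$ if no such $n$ exists. *)

theory Defs
  imports "HOL-Analysis.Analysis"
begin

abbreviation unit_interval :: "real topology" where
  "unit_interval \<equiv> top_of_set {0..1}"

definition fibrewise_space :: "'b topology \<Rightarrow> 'x topology \<Rightarrow> ('x \<Rightarrow> 'b) \<Rightarrow> bool" where
  "fibrewise_space TB X pX \<longleftrightarrow> continuous_map X TB pX"

definition fibrewise_map ::
  "'b topology \<Rightarrow> 'x topology \<Rightarrow> ('x \<Rightarrow> 'b) \<Rightarrow> 'y topology \<Rightarrow> ('y \<Rightarrow> 'b) \<Rightarrow> ('x \<Rightarrow> 'y) \<Rightarrow> bool" where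
  "fibrewise_map TB X pX Y pY f \<longleftrightarrow>
     continuous_map X Y f \<and> (\<forall>x\<in>topspace X. pY (f x) = pX x)"

definition fibrewise_pointed_space ::
  "'b topology \<Rightarrow> 'x topology \<Rightarrow> ('x \<Rightarrow> 'b) \<Rightarrow> ('b \<Rightarrow> 'x) \<Rightarrow> bool" where
  "fibrewise_pointed_space TB X pX sX \<longleftrightarrow>
     fibrewise_space TB X pX \<and> continuous_map TB X sX \<and> (\<forall>b\<in>topspace TB. pX (sX b) = b)"

definition fibrewise_pointed_map ::
  "'b topology \<Rightarrow> 'x topology \<Rightarrow> ('x \<Rightarrow> 'b) \<Rightarrow> ('b \<Rightarrow> 'x) \<Rightarrow>
   'y topology \<Rightarrow> ('y \<Rightarrow> 'b) \<Rightarrow> ('b \<Rightarrow> 'y) \<Rightarrow> ('x \<Rightarrow> 'y) \<Rightarrow> bool" where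
  "fibrewise_pointed_map TB X pX sX Y pY sY f \<longleftrightarrow>
     fibrewise_map TB X pX Y pY f \<and> (\<forall>b\<in>topspace TB. f (sX b) = sY b)"

definition fibrewise_homotopic ::
  "'b topology \<Rightarrow> 'x topology \<Rightarrow> ('x \<Rightarrow> 'b) \<Rightarrow> 'y topology \<Rightarrow> ('y \<Rightarrow> 'b) \<Rightarrow>
   ('x \<Rightarrow> 'y) \<Rightarrow> ('x \<Rightarrow> 'y) \<Rightarrow> bool" where
  "fibrewise_homotopic TB X pX Y pY g h \<longleftrightarrow>
     (\<exists>H. fibrewise_map TB (prod_topology X unit_interval) (pX \<circ> fst) Y pY H \<and>
          (\<forall>x\<in>topspace X. H (x, 0) = g x \<and> H (x, 1) = h x))"

definition fibrewise_pointed_homotopic ::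
  "'b topology \<Rightarrow> 'x topology \<Rightarrow> ('x \<Rightarrow> 'b) \<Rightarrow> ('b \<Rightarrow> 'x) \<Rightarrow>
   'y topology \<Rightarrow> ('y \<Rightarrow> 'b) \<Rightarrow> ('b \<Rightarrow> 'y) \<Rightarrow> ('x \<Rightarrow> 'y) \<Rightarrow> ('x \<Rightarrow> 'y) \<Rightarrow> bool" where
  "fibrewise_pointed_homotopic TB X pX sX Y pY sY g h \<longleftrightarrow>
     (\<exists>H. fibrewise_map TB (prod_topology X unit_interval) (pX \<circ> fst) Y pY H \<and>
          (\<forall>x\<in>topspace X. H (x, 0) = g x \<and> H (x, 1) = h x) \<and>
          (\<forall>b\<in>topspace TB. \<forall>t\<in>{0..1}. H (sX b, t) = sY b))"

text \<open>HOL cannot quantify over all types inside a formula, so the test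
  spaces Y range over all fibrewise spaces whose points lie in the type
  'x + 'a \<times> real; this type is large enough to carry (a copy of) the fibrewise
  mapping cylinder of j, the universal test space, so the notion agrees with the
  usual one.\<close>
definition fibrewise_cofibration ::
  "'b topology \<Rightarrow> 'a topology \<Rightarrow> ('a \<Rightarrow> 'b) \<Rightarrow> 'x topology \<Rightarrow> ('x \<Rightarrow> 'b) \<Rightarrow> ('a \<Rightarrow> 'x) \<Rightarrow> bool" where
  "fibrewise_cofibration TB A pA X pX j \<longleftrightarrow>
     fibrewise_map TB A pA X pX j \<and>
     (\<forall>(Y :: ('x + 'a \<times> real) topology) pY g H.
        fibrewise_space TB Y pY \<longrightarrow>
        fibrewise_map TB X pX Y pY g \<longrightarrow>
        fibrewise_map TB (prod_topology A unit_interval) (pA \<circ> fst) Y pY H \<longrightarrow>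
        (\<forall>a\<in>topspace A. H (a, 0) = g (j a)) \<longrightarrow>
        (\<exists>H'. fibrewise_map TB (prod_topology X unit_interval) (pX \<circ> fst) Y pY H' \<and>
              (\<forall>x\<in>topspace X. H' (x, 0) = g x) \<and>
              (\<forall>a\<in>topspace A. \<forall>t\<in>{0..1}. H' (j a, t) = H (a, t))))"

definition closed_fibrewise_cofibration ::
  "'b topology \<Rightarrow> 'a topology \<Rightarrow> ('a \<Rightarrow> 'b) \<Rightarrow> 'x topology \<Rightarrow> ('x \<Rightarrow> 'b) \<Rightarrow> ('a \<Rightarrow> 'x) \<Rightarrow> bool" where
  "closed_fibrewise_cofibration TB A pA X pX j \<longleftrightarrow>
     fibrewise_cofibration TB A pA X pX j \<and> closedin X (j ` topspace A)"

definition fibrewise_well_pointed ::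
  "'b topology \<Rightarrow> 'x topology \<Rightarrow> ('x \<Rightarrow> 'b) \<Rightarrow> ('b \<Rightarrow> 'x) \<Rightarrow> bool" where
  "fibrewise_well_pointed TB X pX sX \<longleftrightarrow>
     fibrewise_pointed_space TB X pX sX \<and> closed_fibrewise_cofibration TB TB id X pX sX"

text \<open>Fibrewise sectional category secat_B(f) of f : E to X, valued in enat
  (infinity when no finite cover exists: Inf of the empty set).\<close>
definition secat_B ::
  "'b topology \<Rightarrow> 'e topology \<Rightarrow> ('e \<Rightarrow> 'b) \<Rightarrow> 'x topology \<Rightarrow> ('x \<Rightarrow> 'b) \<Rightarrow> ('e \<Rightarrow> 'x) \<Rightarrow> enat" where
  "secat_B TB E pE X pX f = Inf {enat n | n. \<exists>U :: nat \<Rightarrow> 'x set.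
      (\<Union>i\<le>n. U i) = topspace X \<and>
      (\<forall>i\<le>n. openin X (U i) \<and>
         (\<exists>s. fibrewise_map TB (subtopology X (U i)) pX E pE s \<and>
              fibrewise_homotopic TB (subtopology X (U i)) pX X pX (f \<circ> s) id))}"

definition secat_BB ::
  "'b topology \<Rightarrow> 'e topology \<Rightarrow> ('e \<Rightarrow> 'b) \<Rightarrow> ('b \<Rightarrow> 'e) \<Rightarrow>
   'x topology \<Rightarrow> ('x \<Rightarrow> 'b) \<Rightarrow> ('b \<Rightarrow> 'x) \<Rightarrow> ('e \<Rightarrow> 'x) \<Rightarrow> enat" where
  "secat_BB TB E pE sE X pX sX f = Inf {enat n | n. \<exists>U :: nat \<Rightarrow> 'x set.
      (\<Union>i\<le>n. U i) = topspace X \<and>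
      (\<forall>i\<le>n. openin X (U i) \<and> sX ` topspace TB \<subseteq> U i \<and>
         (\<exists>s. fibrewise_pointed_map TB (subtopology X (U i)) pX sX E pE sE s \<and>
              fibrewise_pointed_homotopic TB (subtopology X (U i)) pX sX X pX sX (f \<circ> s) id))}"

end

theory Submission
  imports Defs
begin

text \<open>Pointed covers are in particular covers, so the first inequality is immediate. For the
  second, well-pointedness of \<open>X\<close> (via a Strom-type retraction of \<open>X \<times> I\<close> onto
  \<open>X \<times> 0 \<union> s(B) \<times> I\<close>) yields an open neighbourhood \<open>N\<close> of the section which deforms into it
  by a fibrewise pointed homotopy; on \<open>N\<close> the map \<open>sE \<circ> pX\<close> is a pointed homotopy section of
  \<open>f\<close>. Given a cover \<open>U\<^sub>0, \<dots>, U\<^sub>n\<close> by open sets carrying homotopy sections, separate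
  \<open>s(B)\<close> from \<open>X - N\<close> by disjoint open sets \<open>C\<close> and \<open>A\<close> (normality of \<open>X\<close>). Then the sets
  \<open>(A \<inter> U\<^sub>i) \<union> C\<close> together with \<open>N\<close> form a cover by \<open>n + 2\<close> open sets carrying pointed
  homotopy sections.\<close>

definition fibrewise_homotopy_section_on ::
  "'b topology \<Rightarrow> 'x topology \<Rightarrow> ('x \<Rightarrow> 'b) \<Rightarrow> 'e topology \<Rightarrow> ('e \<Rightarrow> 'b) \<Rightarrow>
   ('e \<Rightarrow> 'x) \<Rightarrow> 'x set \<Rightarrow> bool" where
  "fibrewise_homotopy_section_on TB X pX E pE f U \<longleftrightarrow>
     (\<exists>s. fibrewise_map TB (subtopology X U) pX E pE s \<and>
          fibrewise_homotopic TB (subtopology X U) pX X pX (f \<circ> s) id)"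

definition fibrewise_pointed_homotopy_section_on ::
  "'b topology \<Rightarrow> 'x topology \<Rightarrow> ('x \<Rightarrow> 'b) \<Rightarrow> ('b \<Rightarrow> 'x) \<Rightarrow>
   'e topology \<Rightarrow> ('e \<Rightarrow> 'b) \<Rightarrow> ('b \<Rightarrow> 'e) \<Rightarrow> ('e \<Rightarrow> 'x) \<Rightarrow> 'x set \<Rightarrow> bool" where
  "fibrewise_pointed_homotopy_section_on TB X pX sX E pE sE f U \<longleftrightarrow>
     (\<exists>s. fibrewise_pointed_map TB (subtopology X U) pX sX E pE sE s \<and>
          fibrewise_pointed_homotopic TB (subtopology X U) pX sX X pX sX (f \<circ> s) id)"

lemma secat_B_altdef:
  "secat_B TB E pE X pX f = Inf {enat n | n. \<exists>U :: nat \<Rightarrow> 'x set.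
      (\<Union>i\<le>n. U i) = topspace X \<and>
      (\<forall>i\<le>n. openin X (U i) \<and> fibrewise_homotopy_section_on TB X pX E pE f (U i))}"
  by (simp add: secat_B_def fibrewise_homotopy_section_on_def)

lemma secat_BB_altdef:
  "secat_BB TB E pE sE X pX sX f = Inf {enat n | n. \<exists>U :: nat \<Rightarrow> 'x set.
      (\<Union>i\<le>n. U i) = topspace X \<and>
      (\<forall>i\<le>n. openin X (U i) \<and> sX ` topspace TB \<subseteq> U i \<and>
         fibrewise_pointed_homotopy_section_on TB X pX sX E pE sE f (U i))}"
  by (simp add: secat_BB_def fibrewise_pointed_homotopy_section_on_def)

lemma Inf_enat_Collect_neq_infinityE:
  assumes "Inf {enat n | n. P n} \<noteq> \<infinity>"
  obtains n where "Inf {enat n | n. P n} = enat n" "P n"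
proof -
  have "{enat n | n. P n} \<noteq> {}" using assms by (metis Inf_empty top_enat_def)
  then have "Inf {enat n | n. P n} \<in> {enat n | n. P n}" by (meson ex_in_conv wellorder_InfI)
  with that show thesis by blast
qed

lemma fibrewise_pointed_homotopic_imp_fibrewise_homotopic:
  "fibrewise_pointed_homotopic TB X pX sX Y pY sY g h \<Longrightarrow> fibrewise_homotopic TB X pX Y pY g h"
  unfolding fibrewise_pointed_homotopic_def fibrewise_homotopic_def by blast

lemma fibrewise_pointed_homotopy_section_on_imp_homotopy_section_on:
  assumes "fibrewise_pointed_homotopy_section_on TB X pX sX E pE sE f U"
  shows "fibrewise_homotopy_section_on TB X pX E pE f U"
  using assms fibrewise_pointed_homotopic_imp_fibrewise_homotopic
  unfolding fibrewise_pointed_homotopy_section_on_def fibrewise_homotopy_section_on_def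
    fibrewise_pointed_map_def
  by blast

lemma secat_B_le_secat_BB:
  fixes X :: "'x topology"
  shows "secat_B TB E pE X pX f \<le> secat_BB TB E pE sE X pX sX f"
  unfolding secat_B_altdef secat_BB_altdef
proof (rule Inf_superset_mono, rule Collect_mono, intro impI, elim exE conjE)
  fix m n and U :: "nat \<Rightarrow> 'x set"
  assume m: "m = enat n" and cover: "(\<Union>i\<le>n. U i) = topspace X"
    and pointed: "\<forall>i\<le>n. openin X (U i) \<and> sX ` topspace TB \<subseteq> U i \<and>
       fibrewise_pointed_homotopy_section_on TB X pX sX E pE sE f (U i)"
  have "\<forall>i\<le>n. openin X (U i) \<and> fibrewise_homotopy_section_on TB X pX E pE f (U i)"
    using pointed fibrewise_pointed_homotopy_section_on_imp_homotopy_section_on by meson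
  then show "\<exists>n. m = enat n \<and> (\<exists>U :: nat \<Rightarrow> 'x set. (\<Union>i\<le>n. U i) = topspace X \<and>
      (\<forall>i\<le>n. openin X (U i) \<and> fibrewise_homotopy_section_on TB X pX E pE f (U i)))"
    by (intro exI[of _ n] exI[of _ U] conjI m cover)
qed

subsection \<open>Restriction and gluing\<close>

lemma continuous_map_prod_subtopology:
  "continuous_map (prod_topology X Z) Y h \<Longrightarrow>
   continuous_map (prod_topology (subtopology X S) Z) Y h"
  by (simp add: prod_topology_subtopology continuous_map_from_subtopology)

lemma fibrewise_map_subtopology:
  "fibrewise_map TB X pX Y pY g \<Longrightarrow> fibrewise_map TB (subtopology X S) pX Y pY g"
  by (simp add: fibrewise_map_def continuous_map_from_subtopology)

lemma fibrewise_homotopic_subtopology: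
  "fibrewise_homotopic TB X pX Y pY g h \<Longrightarrow> fibrewise_homotopic TB (subtopology X S) pX Y pY g h"
  unfolding fibrewise_homotopic_def fibrewise_map_def
  by (fastforce intro: continuous_map_prod_subtopology)

lemma fibrewise_pointed_homotopic_subtopology:
  "fibrewise_pointed_homotopic TB X pX sX Y pY sY g h \<Longrightarrow>
   fibrewise_pointed_homotopic TB (subtopology X S) pX sX Y pY sY g h"
  unfolding fibrewise_pointed_homotopic_def fibrewise_map_def
  by (fastforce intro: continuous_map_prod_subtopology)

lemma fibrewise_homotopy_section_on_mono:
  assumes "fibrewise_homotopy_section_on TB X pX E pE f U" "V \<subseteq> U"
  shows "fibrewise_homotopy_section_on TB X pX E pE f V"
proof -
  have "subtopology X V = subtopology (subtopology X U) V"
    using assms(2) by (simp add: subtopology_subtopology Int_absorb1)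
  then show ?thesis
    using assms(1) fibrewise_map_subtopology fibrewise_homotopic_subtopology
    unfolding fibrewise_homotopy_section_on_def by metis
qed

lemma fibrewise_pointed_homotopy_section_on_mono:
  assumes "fibrewise_pointed_homotopy_section_on TB X pX sX E pE sE f U" "V \<subseteq> U"
  shows "fibrewise_pointed_homotopy_section_on TB X pX sX E pE sE f V"
proof -
  have "subtopology X V = subtopology (subtopology X U) V"
    using assms(2) by (simp add: subtopology_subtopology Int_absorb1)
  then show ?thesis
    using assms(1) fibrewise_map_subtopology fibrewise_pointed_homotopic_subtopology
    unfolding fibrewise_pointed_homotopy_section_on_def fibrewise_pointed_map_def by metis
qed

lemma continuous_map_cases_openin:
  assumes "openin X S" "openin X C" "S \<inter> C = {}"
    "continuous_map (subtopology X C) Y f" "continuous_map (subtopology X S) Y g"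
  shows "continuous_map (subtopology X (S \<union> C)) Y (\<lambda>x. if x \<in> C then f x else g x)"
proof (rule pasting_lemma[where I = "{True, False}" and T = "\<lambda>b. if b then C else S"
      and f = "\<lambda>b. if b then f else g"])
  fix b :: bool
  have "openin (subtopology X (S \<union> C)) C" "openin (subtopology X (S \<union> C)) S"
    using assms(1,2) by (auto simp: openin_subtopology)
  then show "openin (subtopology X (S \<union> C)) (if b then C else S)" by simp
  show "continuous_map (subtopology (subtopology X (S \<union> C)) (if b then C else S)) Y
      (if b then f else g)"
    using assms(4,5) by (simp add: subtopology_subtopology Int_absorb1)
qed (use assms(3) in auto)

lemma continuous_map_prod_cases_openin:
  assumes "openin X S" "openin X C" "S \<inter> C = {}"
    "continuous_map (prod_topology (subtopology X C) Z) Y f"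
    "continuous_map (prod_topology (subtopology X S) Z) Y g"
  shows "continuous_map (prod_topology (subtopology X (S \<union> C)) Z) Y
    (\<lambda>z. if fst z \<in> C then f z else g z)"
proof (rule continuous_map_eq)
  show "continuous_map (prod_topology (subtopology X (S \<union> C)) Z) Y
      (\<lambda>z. if z \<in> C \<times> topspace Z then f z else g z)"
    using assms unfolding prod_topology_subtopology Times_Un_distrib1
    by (intro continuous_map_cases_openin) (auto simp: openin_prod_Times_iff)
qed auto

subsection \<open>A pointed contractible neighbourhood of the section\<close>

lemma fibrewise_cofibration_extend:
  fixes A :: "'a topology" and X :: "'x topology" and Y :: "('x + 'a \<times> real) topology"
  assumes "fibrewise_cofibration TB A pA X pX j" "fibrewise_space TB Y pY"
    "fibrewise_map TB X pX Y pY g"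
    "fibrewise_map TB (prod_topology A unit_interval) (pA \<circ> fst) Y pY H"
    "\<And>a. a \<in> topspace A \<Longrightarrow> H (a, 0) = g (j a)"
  obtains H' where "fibrewise_map TB (prod_topology X unit_interval) (pX \<circ> fst) Y pY H'"
    "\<And>x. x \<in> topspace X \<Longrightarrow> H' (x, 0) = g x"
    "\<And>a t. a \<in> topspace A \<Longrightarrow> t \<in> {0..1} \<Longrightarrow> H' (j a, t) = H (a, t)"
proof -
  have "\<exists>H'. fibrewise_map TB (prod_topology X unit_interval) (pX \<circ> fst) Y pY H' \<and>
      (\<forall>x\<in>topspace X. H' (x, 0) = g x) \<and>
      (\<forall>a\<in>topspace A. \<forall>t\<in>{0..1}. H' (j a, t) = H (a, t))"
    using assms(1) unfolding fibrewise_cofibration_def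
    by (elim conjE allE[of _ Y] allE[of _ pY] allE[of _ g] allE[of _ H]) (use assms(2-5) in simp)
  with that show thesis by blast
qed

text \<open>The subspace \<open>X \<times> 0 \<union> s(B) \<times> (0,1]\<close> of \<open>X \<times> I\<close>, coded inside the type
  \<open>'x + 'b \<times> real\<close> of the test spaces in \<open>fibrewise_cofibration\<close>: \<open>Inl x\<close> stands for
  \<open>(x, 0)\<close> and \<open>Inr (b, t)\<close> for \<open>(sX b, t)\<close>.\<close>

definition section_cylinder_code :: "('b \<Rightarrow> 'x) \<Rightarrow> 'x + 'b \<times> real \<Rightarrow> 'x \<times> real" where
  "section_cylinder_code sX = case_sum (\<lambda>x. (x, 0)) (\<lambda>(b, t). (sX b, t))"

definition section_cylinder_points :: "'b topology \<Rightarrow> 'x topology \<Rightarrow> ('x + 'b \<times> real) set" where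
  "section_cylinder_points TB X =
     Inl ` topspace X \<union> {Inr (b, t) | b t. b \<in> topspace TB \<and> 0 < t \<and> t \<le> 1}"

definition section_cylinder ::
  "'b topology \<Rightarrow> 'x topology \<Rightarrow> ('b \<Rightarrow> 'x) \<Rightarrow> ('x + 'b \<times> real) topology" where
  "section_cylinder TB X sX =
     pullback_topology (section_cylinder_points TB X) (section_cylinder_code sX)
       (prod_topology X unit_interval)"

lemma topspace_section_cylinder:
  assumes "continuous_map TB X sX"
  shows "topspace (section_cylinder TB X sX) = section_cylinder_points TB X"
  using continuous_map_image_subset_topspace[OF assms]
  by (auto simp: section_cylinder_def topspace_pullback_topology section_cylinder_points_def
      section_cylinder_code_def)

lemma continuous_map_section_cylinder_code:
  "continuous_map (section_cylinder TB X sX) (prod_topology X unit_interval) (section_cylinder_code sX)"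
  unfolding section_cylinder_def by (rule continuous_map_pullback[OF continuous_map_id, simplified])

lemma fibrewise_space_section_cylinder:
  assumes "fibrewise_pointed_space TB X pX sX"
  shows "fibrewise_space TB (section_cylinder TB X sX) (case_sum pX fst)"
proof -
  have cpX: "continuous_map X TB pX" and csX: "continuous_map TB X sX"
    and psX: "\<And>b. b \<in> topspace TB \<Longrightarrow> pX (sX b) = b"
    using assms by (auto simp: fibrewise_pointed_space_def fibrewise_space_def)
  have "continuous_map (section_cylinder TB X sX) TB (pX \<circ> fst \<circ> section_cylinder_code sX)"
    by (intro continuous_map_compose[OF continuous_map_section_cylinder_code]
        continuous_map_compose[OF continuous_map_fst] cpX)
  moreover have "(pX \<circ> fst \<circ> section_cylinder_code sX) y = case_sum pX fst y"
    if "y \<in> topspace (section_cylinder TB X sX)" for y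
    using that psX by (auto simp: topspace_section_cylinder[OF csX] section_cylinder_points_def
        section_cylinder_code_def)
  ultimately show ?thesis
    unfolding fibrewise_space_def by (rule continuous_map_eq)
qed

lemma fibrewise_map_section_cylinder_Inl:
  "fibrewise_map TB X pX (section_cylinder TB X sX) (case_sum pX fst) Inl"
proof -
  have "continuous_map X (section_cylinder TB X sX) Inl"
    unfolding section_cylinder_def
    by (rule continuous_map_pullback')
      (auto simp: section_cylinder_points_def section_cylinder_code_def o_def continuous_map_paired)
  then show ?thesis by (simp add: fibrewise_map_def)
qed

lemma fibrewise_map_section_cylinder_base:
  assumes "fibrewise_pointed_space TB X pX sX"
  shows "fibrewise_map TB (prod_topology TB unit_interval) (id \<circ> fst)
    (section_cylinder TB X sX) (case_sum pX fst) (\<lambda>(b, t). if t = 0 then Inl (sX b) else Inr (b, t))"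
    (is "fibrewise_map _ _ _ _ _ ?H")
proof -
  have csX: "continuous_map TB X sX" and psX: "\<And>b. b \<in> topspace TB \<Longrightarrow> pX (sX b) = b"
    using assms by (auto simp: fibrewise_pointed_space_def)
  have "section_cylinder_code sX \<circ> ?H = (\<lambda>z. (sX (fst z), snd z))"
    by (auto simp: section_cylinder_code_def fun_eq_iff)
  then have "continuous_map (prod_topology TB unit_interval) (section_cylinder TB X sX) ?H"
    unfolding section_cylinder_def using continuous_map_image_subset_topspace[OF csX, THEN subsetD]
    by (intro continuous_map_pullback')
      (auto simp: section_cylinder_points_def continuous_map_paired continuous_map_snd
        intro: continuous_map_compose[OF continuous_map_fst csX, unfolded o_def])
  then show ?thesis
    using psX by (auto simp: fibrewise_map_def)
qed

text \<open>Extending the inclusion of \<open>B \<times> I\<close> over \<open>X \<times> I\<close> yields a fibrewise retraction of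
  \<open>X \<times> I\<close> onto \<open>X \<times> 0 \<union> s(B) \<times> I\<close>.\<close>

lemma fibrewise_well_pointed_cylinder_retraction:
  fixes TB :: "'b topology" and X :: "'x topology"
  assumes "fibrewise_well_pointed TB X pX sX"
  obtains R where
    "continuous_map (prod_topology X unit_interval) (prod_topology X unit_interval) R"
    "\<And>x t. x \<in> topspace X \<Longrightarrow> t \<in> {0..1} \<Longrightarrow> pX (fst (R (x, t))) = pX x"
    "\<And>x. x \<in> topspace X \<Longrightarrow> R (x, 0) = (x, 0)"
    "\<And>b t. b \<in> topspace TB \<Longrightarrow> t \<in> {0..1} \<Longrightarrow> R (sX b, t) = (sX b, t)"
    "\<And>x t. x \<in> topspace X \<Longrightarrow> t \<in> {0..1} \<Longrightarrow>
       snd (R (x, t)) = 0 \<or> fst (R (x, t)) \<in> sX ` topspace TB"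
proof -
  have ps: "fibrewise_pointed_space TB X pX sX" and cof: "fibrewise_cofibration TB TB id X pX sX"
    using assms by (auto simp: fibrewise_well_pointed_def closed_fibrewise_cofibration_def)
  have csX: "continuous_map TB X sX" and psX: "\<And>b. b \<in> topspace TB \<Longrightarrow> pX (sX b) = b"
    using ps by (auto simp: fibrewise_pointed_space_def)
  let ?Y = "section_cylinder TB X sX" and ?q = "section_cylinder_code sX"
  obtain H where fH: "fibrewise_map TB (prod_topology X unit_interval) (pX \<circ> fst) ?Y (case_sum pX fst) H"
    and H0: "\<And>x. x \<in> topspace X \<Longrightarrow> H (x, 0) = Inl x"
    and Hs: "\<And>b t. b \<in> topspace TB \<Longrightarrow> t \<in> {0..1} \<Longrightarrow>
      H (sX b, t) = (if t = 0 then Inl (sX b) else Inr (b, t))"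
    by (rule fibrewise_cofibration_extend[OF cof fibrewise_space_section_cylinder[OF ps]
          fibrewise_map_section_cylinder_Inl fibrewise_map_section_cylinder_base[OF ps]]) auto
  have cH: "continuous_map (prod_topology X unit_interval) ?Y H"
    and pH: "\<And>x t. x \<in> topspace X \<Longrightarrow> t \<in> {0..1} \<Longrightarrow> case_sum pX fst (H (x, t)) = pX x"
    using fH by (auto simp: fibrewise_map_def)
  have HY: "H (x, t) \<in> section_cylinder_points TB X" if "x \<in> topspace X" "t \<in> {0..1}" for x t
    using cH that topspace_section_cylinder[OF csX] by (auto simp: continuous_map_def Pi_iff)
  show thesis
  proof
    show "continuous_map (prod_topology X unit_interval) (prod_topology X unit_interval) (?q \<circ> H)"
      using cH continuous_map_section_cylinder_code by (rule continuous_map_compose)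
    show "pX (fst ((?q \<circ> H) (x, t))) = pX x" if "x \<in> topspace X" "t \<in> {0..1}" for x t
      using pH[OF that] HY[OF that] psX
      by (auto simp: section_cylinder_points_def section_cylinder_code_def)
    show "(?q \<circ> H) (x, 0) = (x, 0)" if "x \<in> topspace X" for x
      using H0 that by (simp add: section_cylinder_code_def)
    show "(?q \<circ> H) (sX b, t) = (sX b, t)" if "b \<in> topspace TB" "t \<in> {0..1}" for b t
      using Hs that by (simp add: section_cylinder_code_def)
    show "snd ((?q \<circ> H) (x, t)) = 0 \<or> fst ((?q \<circ> H) (x, t)) \<in> sX ` topspace TB"
      if "x \<in> topspace X" "t \<in> {0..1}" for x t
      using HY[OF that] by (auto simp: section_cylinder_points_def section_cylinder_code_def)
  qed
qed

lemma continuous_map_cylinder_reverse: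
  "continuous_map (prod_topology X unit_interval) (prod_topology X unit_interval)
     (\<lambda>z. (fst z, 1 - snd z))"
proof -
  have "continuous_map (prod_topology X unit_interval) euclideanreal (\<lambda>z. 1 - snd z)"
    using continuous_map_snd[of X unit_interval]
    by (intro continuous_map_diff) (auto simp: continuous_map_in_subtopology)
  then show ?thesis
    by (auto simp: continuous_map_paired continuous_map_in_subtopology continuous_map_fst)
qed

lemma fibrewise_well_pointed_section_neighbourhood:
  fixes TB :: "'b topology" and X :: "'x topology"
  assumes "fibrewise_well_pointed TB X pX sX"
  obtains N where "openin X N" "sX ` topspace TB \<subseteq> N"
    "fibrewise_pointed_homotopic TB (subtopology X N) pX sX X pX sX (sX \<circ> pX) id"
proof -
  obtain R where
    cR: "continuous_map (prod_topology X unit_interval) (prod_topology X unit_interval) R"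
    and pR: "\<And>x t. x \<in> topspace X \<Longrightarrow> t \<in> {0..1} \<Longrightarrow> pX (fst (R (x, t))) = pX x"
    and R0: "\<And>x. x \<in> topspace X \<Longrightarrow> R (x, 0) = (x, 0)"
    and Rs: "\<And>b t. b \<in> topspace TB \<Longrightarrow> t \<in> {0..1} \<Longrightarrow> R (sX b, t) = (sX b, t)"
    and Rimg: "\<And>x t. x \<in> topspace X \<Longrightarrow> t \<in> {0..1} \<Longrightarrow>
       snd (R (x, t)) = 0 \<or> fst (R (x, t)) \<in> sX ` topspace TB"
    using fibrewise_well_pointed_cylinder_retraction[OF assms] by blast
  have csX: "continuous_map TB X sX" and psX: "\<And>b. b \<in> topspace TB \<Longrightarrow> pX (sX b) = b"
    using assms by (auto simp: fibrewise_well_pointed_def fibrewise_pointed_space_def)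
  define N where "N = {x \<in> topspace X. snd (R (x, 1)) \<in> {0<..}}"
  define K where "K z = fst (R (fst z, 1 - snd z))" for z
  have "continuous_map X (prod_topology X unit_interval) (\<lambda>x. (x, 1))"
    by (simp add: continuous_map_paired)
  then have "continuous_map X unit_interval (\<lambda>x. snd (R (x, 1)))"
    using continuous_map_compose[OF continuous_map_compose[OF _ cR] continuous_map_snd]
    by (simp add: o_def)
  then have "continuous_map X euclideanreal (\<lambda>x. snd (R (x, 1)))"
    by (simp add: continuous_map_in_subtopology)
  then have oN: "openin X N"
    unfolding N_def by (rule openin_continuous_map_preimage) simp
  have cK: "continuous_map (prod_topology X unit_interval) X K"
    unfolding K_def
    using continuous_map_compose[OF continuous_map_compose[OF continuous_map_cylinder_reverse cR]
        continuous_map_fst]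
    by (simp add: o_def)
  have RN: "fst (R (x, 1)) = sX (pX x)" if "x \<in> N" for x
  proof -
    have x: "x \<in> topspace X" and pos: "snd (R (x, 1)) > 0" using that by (auto simp: N_def)
    then obtain b where b: "b \<in> topspace TB" "fst (R (x, 1)) = sX b" using Rimg[of x 1] by auto
    then have "b = pX x" using pR[of x 1] x psX by auto
    then show ?thesis using b by simp
  qed
  show thesis
  proof
    show "openin X N" by (rule oN)
    show "sX ` topspace TB \<subseteq> N"
      using Rs continuous_map_image_subset_topspace[OF csX] by (auto simp: N_def)
    show "fibrewise_pointed_homotopic TB (subtopology X N) pX sX X pX sX (sX \<circ> pX) id"
      unfolding fibrewise_pointed_homotopic_def fibrewise_map_def
    proof (intro exI conjI ballI)
      show "continuous_map (prod_topology (subtopology X N) unit_interval) X K"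
        using cK by (rule continuous_map_prod_subtopology)
    qed (auto simp: K_def pR R0 Rs RN)
  qed
qed

subsection \<open>Pointed covers from covers\<close>

lemma fibrewise_pointed_homotopy_section_on_if_deforms_to_section:
  assumes "fibrewise_pointed_space TB X pX sX" "fibrewise_pointed_space TB E pE sE"
    and "fibrewise_pointed_map TB E pE sE X pX sX f"
    and "fibrewise_pointed_homotopic TB (subtopology X N) pX sX X pX sX (sX \<circ> pX) id"
  shows "fibrewise_pointed_homotopy_section_on TB X pX sX E pE sE f N"
  unfolding fibrewise_pointed_homotopy_section_on_def
proof (intro exI conjI)
  have cpX: "continuous_map X TB pX" and psX: "\<And>b. b \<in> topspace TB \<Longrightarrow> pX (sX b) = b"
    and csE: "continuous_map TB E sE" and psE: "\<And>b. b \<in> topspace TB \<Longrightarrow> pE (sE b) = b"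
    and fsE: "\<And>b. b \<in> topspace TB \<Longrightarrow> f (sE b) = sX b"
    using assms(1-3) by (auto simp: fibrewise_pointed_space_def fibrewise_space_def
        fibrewise_pointed_map_def)
  have pXin: "\<And>x. x \<in> topspace X \<Longrightarrow> pX x \<in> topspace TB"
    using cpX continuous_map_image_subset_topspace by blast
  show "fibrewise_pointed_map TB (subtopology X N) pX sX E pE sE (sE \<circ> pX)"
    using continuous_map_compose[OF cpX csE] psE psX pXin
    by (auto simp: fibrewise_pointed_map_def fibrewise_map_def continuous_map_from_subtopology)
  obtain H where "fibrewise_map TB (prod_topology (subtopology X N) unit_interval) (pX \<circ> fst) X pX H"
    "\<forall>x\<in>topspace (subtopology X N). H (x, 0) = sX (pX x) \<and> H (x, 1) = x"
    "\<forall>b\<in>topspace TB. \<forall>t\<in>{0..1}. H (sX b, t) = sX b"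
    using assms(4) by (auto simp: fibrewise_pointed_homotopic_def)
  then show "fibrewise_pointed_homotopic TB (subtopology X N) pX sX X pX sX (f \<circ> (sE \<circ> pX)) id"
    unfolding fibrewise_pointed_homotopic_def using fsE pXin by auto
qed

lemma fibrewise_pointed_homotopy_section_on_Un:
  assumes S: "openin X S" "fibrewise_homotopy_section_on TB X pX E pE f S"
    and C: "openin X C" "fibrewise_pointed_homotopy_section_on TB X pX sX E pE sE f C"
    and SC: "S \<inter> C = {}" "sX ` topspace TB \<subseteq> C"
  shows "fibrewise_pointed_homotopy_section_on TB X pX sX E pE sE f (S \<union> C)"
proof -
  obtain s\<^sub>S H\<^sub>S where sS: "fibrewise_map TB (subtopology X S) pX E pE s\<^sub>S"
    and HS: "fibrewise_map TB (prod_topology (subtopology X S) unit_interval) (pX \<circ> fst) X pX H\<^sub>S"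
    and HS01: "\<forall>x\<in>topspace (subtopology X S). H\<^sub>S (x, 0) = f (s\<^sub>S x) \<and> H\<^sub>S (x, 1) = x"
    using S(2) by (auto simp: fibrewise_homotopy_section_on_def fibrewise_homotopic_def)
  obtain s\<^sub>C H\<^sub>C where sC: "fibrewise_pointed_map TB (subtopology X C) pX sX E pE sE s\<^sub>C"
    and HC: "fibrewise_map TB (prod_topology (subtopology X C) unit_interval) (pX \<circ> fst) X pX H\<^sub>C"
    and HC01: "\<forall>x\<in>topspace (subtopology X C). H\<^sub>C (x, 0) = f (s\<^sub>C x) \<and> H\<^sub>C (x, 1) = x"
    and HCs: "\<forall>b\<in>topspace TB. \<forall>t\<in>{0..1}. H\<^sub>C (sX b, t) = sX b"
    using C(2) by (auto simp: fibrewise_pointed_homotopy_section_on_def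
        fibrewise_pointed_homotopic_def)
  have sXC: "sX b \<in> C" if "b \<in> topspace TB" for b using SC(2) that by blast
  have notC: "x \<notin> C" if "x \<in> S" for x using SC(1) that by blast
  define s where "s x = (if x \<in> C then s\<^sub>C x else s\<^sub>S x)" for x
  define H where "H z = (if fst z \<in> C then H\<^sub>C z else H\<^sub>S z)" for z
  show ?thesis
    unfolding fibrewise_pointed_homotopy_section_on_def fibrewise_pointed_homotopic_def
      fibrewise_pointed_map_def fibrewise_map_def
  proof (intro exI[of _ s] exI[of _ H] conjI ballI)
    show "continuous_map (subtopology X (S \<union> C)) E s"
      unfolding s_def using S(1) C(1) SC(1) sS sC
      by (intro continuous_map_cases_openin) (simp_all add: fibrewise_pointed_map_def fibrewise_map_def)
    show "continuous_map (prod_topology (subtopology X (S \<union> C)) unit_interval) X H"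
      unfolding H_def using S(1) C(1) SC(1) HS HC
      by (intro continuous_map_prod_cases_openin) (simp_all add: fibrewise_map_def)
    show "pE (s x) = pX x" if "x \<in> topspace (subtopology X (S \<union> C))" for x
      using that sS sC notC by (cases "x \<in> C") (simp_all add: s_def fibrewise_pointed_map_def fibrewise_map_def)
    show "s (sX b) = sE b" if "b \<in> topspace TB" for b
      using that sC sXC by (simp add: s_def fibrewise_pointed_map_def)
    show "pX (H z) = (pX \<circ> fst) z"
      if "z \<in> topspace (prod_topology (subtopology X (S \<union> C)) unit_interval)" for z
      using that HS HC notC by (cases "fst z \<in> C") (auto simp: H_def fibrewise_map_def)
    show "H (x, 0) = (f \<circ> s) x" "H (x, 1) = id x"
      if "x \<in> topspace (subtopology X (S \<union> C))" for x
      using that HS01 HC01 notC by (auto simp: H_def s_def)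
    show "H (sX b, t) = sX b" if "b \<in> topspace TB" "t \<in> {0..1}" for b t
      using that HCs sXC by (simp add: H_def)
  qed
qed

lemma UN_atMost_Suc_refine:
  assumes "(\<Union>i\<le>n. U i) = T" "T - N \<subseteq> A" "N \<subseteq> T" "C \<subseteq> T"
  shows "(\<Union>i\<le>Suc n. if i \<le> n then (A \<inter> U i) \<union> C else N) = T"
proof -
  have "(\<Union>i\<le>Suc n. if i \<le> n then (A \<inter> U i) \<union> C else N) = (\<Union>i\<le>n. (A \<inter> U i) \<union> C) \<union> N"
    by (auto simp: atMost_Suc)
  also have "\<dots> = T"
    using assms by auto
  finally show ?thesis .
qed

lemma secat_BB_le_Suc_of_homotopy_section_cover:
  fixes X :: "'x topology"
  assumes wpX: "fibrewise_well_pointed TB X pX sX"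
    and psE: "fibrewise_pointed_space TB E pE sE"
    and f: "fibrewise_pointed_map TB E pE sE X pX sX f"
    and nX: "normal_space X"
    and cover: "(\<Union>i\<le>n. U i) = topspace X"
    and sections: "\<forall>i\<le>n. openin X (U i) \<and> fibrewise_homotopy_section_on TB X pX E pE f (U i)"
  shows "secat_BB TB E pE sE X pX sX f \<le> enat (Suc n)"
proof -
  obtain N where oN: "openin X N" and sN: "sX ` topspace TB \<subseteq> N"
    and hN: "fibrewise_pointed_homotopic TB (subtopology X N) pX sX X pX sX (sX \<circ> pX) id"
    using fibrewise_well_pointed_section_neighbourhood[OF wpX] by blast
  have psX: "fibrewise_pointed_space TB X pX sX" and clB: "closedin X (sX ` topspace TB)"
    using wpX by (auto simp: fibrewise_well_pointed_def closed_fibrewise_cofibration_def)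
  have secN: "fibrewise_pointed_homotopy_section_on TB X pX sX E pE sE f N"
    using psX psE f hN by (rule fibrewise_pointed_homotopy_section_on_if_deforms_to_section)
  have "closedin X (topspace X - N)" "disjnt (sX ` topspace TB) (topspace X - N)"
    using oN sN by (auto simp: disjnt_def)
  then obtain C A where oC: "openin X C" and oA: "openin X A" and sC: "sX ` topspace TB \<subseteq> C"
    and NA: "topspace X - N \<subseteq> A" and dCA: "disjnt C A"
    using nX clB unfolding normal_space_def by meson
  have CN: "C \<subseteq> N" using openin_subset[OF oC] NA dCA by (auto simp: disjnt_def)
  define V where "V i = (if i \<le> n then (A \<inter> U i) \<union> C else N)" for i
  have pieces: "openin X (V i) \<and> sX ` topspace TB \<subseteq> V i \<and>
      fibrewise_pointed_homotopy_section_on TB X pX sX E pE sE f (V i)" if "i \<le> Suc n" for i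
  proof (cases "i \<le> n")
    case True
    have oU: "openin X (U i)" and secU: "fibrewise_homotopy_section_on TB X pX E pE f (U i)"
      using sections True by simp_all
    have oAU: "openin X (A \<inter> U i)" using oA oU by (rule openin_Int)
    have "fibrewise_pointed_homotopy_section_on TB X pX sX E pE sE f ((A \<inter> U i) \<union> C)"
    proof (rule fibrewise_pointed_homotopy_section_on_Un[OF oAU _ oC _ _ sC])
      show "fibrewise_homotopy_section_on TB X pX E pE f (A \<inter> U i)"
        using secU by (rule fibrewise_homotopy_section_on_mono) blast
      show "fibrewise_pointed_homotopy_section_on TB X pX sX E pE sE f C"
        using secN CN by (rule fibrewise_pointed_homotopy_section_on_mono)
      show "(A \<inter> U i) \<inter> C = {}" using dCA by (auto simp: disjnt_def)
    qed
    with True oAU oC sC show ?thesis by (simp add: V_def openin_Un le_supI2)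
  next
    case False
    then show ?thesis using oN sN secN by (simp add: V_def)
  qed
  have cover_V: "(\<Union>i\<le>Suc n. V i) = topspace X"
    unfolding V_def using cover NA openin_subset[OF oN] openin_subset[OF oC]
    by (rule UN_atMost_Suc_refine)
  show ?thesis
    unfolding secat_BB_altdef
    by (intro Inf_lower CollectI exI[of _ "Suc n"] exI[of _ V] pieces conjI refl cover_V allI impI)
qed

theorem theorem4p1:
  fixes TB :: "'b topology"
    and E :: "'e topology" and pE :: "'e \<Rightarrow> 'b" and sE :: "'b \<Rightarrow> 'e"
    and X :: "'x topology" and pX :: "'x \<Rightarrow> 'b" and sX :: "'b \<Rightarrow> 'x"
    and f :: "'e \<Rightarrow> 'x"
  assumes wpE: "fibrewise_well_pointed TB E pE sE"
    and wpX: "fibrewise_well_pointed TB X pX sX"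
    and f: "fibrewise_pointed_map TB E pE sE X pX sX f"
    and normal: "(normal_space E \<and> normal_space X) \<or>
                 (closed_fibrewise_cofibration TB E pE X pX f \<and> normal_space X)"
  shows "secat_B TB E pE X pX f \<le> secat_BB TB E pE sE X pX sX f \<and>
         secat_BB TB E pE sE X pX sX f \<le> secat_B TB E pE X pX f + 1"
proof
  show "secat_B TB E pE X pX f \<le> secat_BB TB E pE sE X pX sX f"
    by (rule secat_B_le_secat_BB)
  show "secat_BB TB E pE sE X pX sX f \<le> secat_B TB E pE X pX f + 1"
  proof (cases "secat_B TB E pE X pX f = \<infinity>")
    case False
    then obtain n where n: "secat_B TB E pE X pX f = enat n"
      and "\<exists>U :: nat \<Rightarrow> 'x set. (\<Union>i\<le>n. U i) = topspace X \<and>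
        (\<forall>i\<le>n. openin X (U i) \<and> fibrewise_homotopy_section_on TB X pX E pE f (U i))"
      unfolding secat_B_altdef by (rule Inf_enat_Collect_neq_infinityE)
    then obtain U where "(\<Union>i\<le>n. U i) = topspace X"
      and "\<forall>i\<le>n. openin X (U i) \<and> fibrewise_homotopy_section_on TB X pX E pE f (U i)"
      by blast
    moreover have "fibrewise_pointed_space TB E pE sE" and "normal_space X"
      using wpE normal by (auto simp: fibrewise_well_pointed_def)
    ultimately have "secat_BB TB E pE sE X pX sX f \<le> enat (Suc n)"
      using wpX f by (intro secat_BB_le_Suc_of_homotopy_section_cover)
    then show ?thesis by (simp add: n eSuc_enat[symmetric] eSuc_plus_1)
  qed simp
qed

end
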